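(* Let $\mathbb D=\{z\in\mathbb C:|z|<1\}$ and let $\mathcal P$ be the set of holomorphic functions $p$ on $\mathbb D$ with $\operatorname{Re} p(z)>0$ for all $z\in\mathbb D$ (no normalization $p(0)=1$ is imposed). For $p\in\mathcal P$ and $0<r<1$ set \[ I_p(r):=\int_0^{2\pi}\left|\frac{z p'(z)}{p(z)}\right|^2\,d\theta,\qquad z=re^{i\theta}. \] Then for every $p\in\mathcal P$ and every $0<r<1$, \[ I_p(r)\le \frac{\pi^3 e^{-2}}{(1-r)^2}. \] Moreover, for each fixed $p\in\mathcal P$, $I_p(r)=o\bigl((1-r)^{-2}\bigr)$ as $r\to1^-$. *)

theory Defs
  imports "HOL-Complex_Analysis.Complex_Analysis" "HOL-Library.Landau_Symbols"
begin

definition caratheodory_class :: "(complex \<Rightarrow> complex) set" where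
  "caratheodory_class = {p. p holomorphic_on ball 0 1 \<and> (\<forall>z\<in>ball 0 1. Re (p z) > 0)}"

definition I_p :: "(complex \<Rightarrow> complex) \<Rightarrow> real \<Rightarrow> real" where
  "I_p p r = integral {0..2*pi}
     (\<lambda>\<theta>. (cmod (let z = of_real r * exp (\<i> * of_real \<theta>) in z * deriv p z / p z))\<^sup>2)"

end

theory Submission
  imports Defs
begin

text \<open>Since Re p > 0, the function f = Ln o p is holomorphic on the unit disc with
|Im f| <= pi/2, and z p'(z) / p(z) = z f'(z). Writing f(z) = sum a_n z^n, Parseval's identity
on the circle |z| = r gives I_p(r) = 2 pi sum n^2 |a_n|^2 r^(2n), while Parseval applied to
Im f on circles of radius rho -> 1 gives sum_(n >= 1) |a_n|^2 <= pi^2 / 2. As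
n r^n (1 - r) <= 1/e, the uniform bound follows. Each term |a_n|^2 (n r^n (1 - r))^2 tends
to 0 as r -> 1 and is dominated by the summable |a_n|^2 / e^2, so Tannery's theorem gives the
little-o statement.\<close>

section \<open>Parseval identities on the circle\<close>

lemma has_integral_cis_int:
  fixes k :: int
  shows "((\<lambda>t. cis (of_int k * t)) has_integral (if k = 0 then complex_of_real (2*pi) else 0)) {0..2*pi}"
proof (cases "k = 0")
  case True
  then show ?thesis
    using has_integral_const_real[of "1::complex" 0 "2*pi"] by (simp add: scaleR_conv_of_real)
next
  case False
  define F where "F t = cis (of_int k * t) / (\<i> * of_int k)" for t
  have "(F has_vector_derivative cis (of_int k * t)) (at t)" for t
    unfolding F_def has_vector_derivative_def using False
    by (auto intro!: derivative_eq_intros simp: field_simps scaleR_conv_of_real)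
  then have "((\<lambda>t. cis (of_int k * t)) has_integral F (2*pi) - F 0) {0..2*pi}"
    by (intro fundamental_theorem_of_calculus) (auto intro: has_vector_derivative_at_within)
  moreover have "F (2*pi) = F 0"
    using cis_multiple_2pi[of "of_int k"] by (simp add: F_def mult_ac)
  ultimately show ?thesis
    using False by simp
qed

lemma has_integral_cis_power_cnj:
  "((\<lambda>t. cis t ^ n * cnj (cis t ^ m)) has_integral (if n = m then complex_of_real (2*pi) else 0)) {0..2*pi}"
proof -
  have "cis t ^ n * cnj (cis t ^ m) = cis (of_int (int n - int m) * t)" for t
    \<comment> \<open>qualified: the unqualified \<open>DeMoivre\<close> is the complex-argument version for \<open>cos + i sin\<close>\<close>
    by (simp only: Complex.DeMoivre complex_cnj_power cis_cnj cis_mult) (simp add: algebra_simps)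
  then show ?thesis
    using has_integral_cis_int[of "int n - int m"] by simp
qed

lemma has_integral_cis_power:
  "((\<lambda>t. cis t ^ n) has_integral (if n = 0 then complex_of_real (2*pi) else 0)) {0..2*pi}"
  using has_integral_cis_power_cnj[of n 0] by simp

lemma has_integral_norm_trig_poly_squared:
  fixes c :: "nat \<Rightarrow> complex"
  shows "((\<lambda>t. (cmod (\<Sum>n<N. c n * cis t ^ n))\<^sup>2) has_integral 2*pi * (\<Sum>n<N. (cmod (c n))\<^sup>2)) {0..2*pi}"
proof -
  have expand: "(\<Sum>n<N. c n * cis t ^ n) * cnj (\<Sum>n<N. c n * cis t ^ n)
      = (\<Sum>n<N. \<Sum>m<N. c n * cnj (c m) * (cis t ^ n * cnj (cis t ^ m)))" for t
    by (simp add: sum_product mult_ac)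
  have "((\<lambda>t. (\<Sum>n<N. c n * cis t ^ n) * cnj (\<Sum>n<N. c n * cis t ^ n)) has_integral
        (\<Sum>n<N. \<Sum>m<N. c n * cnj (c m) * (if n = m then complex_of_real (2*pi) else 0))) {0..2*pi}"
    unfolding expand
    by (intro has_integral_sum finite_lessThan has_integral_mult_right has_integral_cis_power_cnj)
  also have "(\<Sum>n<N. \<Sum>m<N. c n * cnj (c m) * (if n = m then complex_of_real (2*pi) else 0))
      = of_real (2*pi * (\<Sum>n<N. (cmod (c n))\<^sup>2))"
    by (simp add: if_distrib sum_distrib_left mult_ac flip: complex_norm_square cong: if_cong)
  finally have "((\<lambda>t. (\<Sum>n<N. c n * cis t ^ n) * cnj (\<Sum>n<N. c n * cis t ^ n)) has_integral
      of_real (2*pi * (\<Sum>n<N. (cmod (c n))\<^sup>2))) {0..2*pi}" .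
  from has_integral_Re[OF this] show ?thesis
    by (simp only: Re_complex_of_real flip: complex_norm_square)
qed

lemma has_integral_trig_poly_squared:
  fixes c :: "nat \<Rightarrow> complex"
  assumes "N > 0"
  shows "((\<lambda>t. (\<Sum>n<N. c n * cis t ^ n)\<^sup>2) has_integral 2*pi * (c 0)\<^sup>2) {0..2*pi}"
proof -
  have expand: "(\<Sum>n<N. c n * cis t ^ n)\<^sup>2 = (\<Sum>n<N. \<Sum>m<N. c n * c m * cis t ^ (n + m))" for t
    by (simp add: power2_eq_square sum_product power_add mult_ac)
  have "((\<lambda>t. (\<Sum>n<N. c n * cis t ^ n)\<^sup>2) has_integral
        (\<Sum>n<N. \<Sum>m<N. c n * c m * (if n + m = 0 then complex_of_real (2*pi) else 0))) {0..2*pi}"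
    unfolding expand
    by (intro has_integral_sum finite_lessThan has_integral_mult_right has_integral_cis_power)
  also have "(\<Sum>n<N. \<Sum>m<N. c n * c m * (if n + m = 0 then complex_of_real (2*pi) else 0))
      = (\<Sum>n<N. if n = 0 then 2*pi * (c 0)\<^sup>2 else 0)"
    using assms by (intro sum.cong refl) (auto simp: power2_eq_square if_distrib mult_ac cong: if_cong)
  also have "\<dots> = 2*pi * (c 0)\<^sup>2"
    using assms by simp
  finally show ?thesis .
qed

lemma power_series_circle_partial_sums:
  fixes c :: "nat \<Rightarrow> complex"
  assumes "summable (\<lambda>n. norm (c n))"
  shows "norm (\<Sum>n<N. c n * cis t ^ n) \<le> (\<Sum>n. norm (c n))"
    and "(\<lambda>N. \<Sum>n<N. c n * cis t ^ n) \<longlonglongrightarrow> (\<Sum>n. c n * cis t ^ n)"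
proof -
  have norm_eq: "norm (c n * cis t ^ n) = norm (c n)" for n
    by (simp add: norm_mult norm_power)
  have "norm (\<Sum>n<N. c n * cis t ^ n) \<le> (\<Sum>n<N. norm (c n))"
    using norm_sum[of "\<lambda>n. c n * cis t ^ n" "{..<N}"] by (simp add: norm_eq)
  also have "\<dots> \<le> (\<Sum>n. norm (c n))"
    using assms by (intro sum_le_suminf) auto
  finally show "norm (\<Sum>n<N. c n * cis t ^ n) \<le> (\<Sum>n. norm (c n))" .
  have "summable (\<lambda>n. norm (c n * cis t ^ n))"
    using assms by (simp add: norm_eq)
  then have "summable (\<lambda>n. c n * cis t ^ n)"
    by (rule summable_norm_cancel)
  then show "(\<lambda>N. \<Sum>n<N. c n * cis t ^ n) \<longlonglongrightarrow> (\<Sum>n. c n * cis t ^ n)"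
    by (rule summable_LIMSEQ)
qed

lemma has_integral_norm_power_series_circle_squared:
  fixes c :: "nat \<Rightarrow> complex"
  assumes c: "summable (\<lambda>n. norm (c n))"
  shows "summable (\<lambda>n. (cmod (c n))\<^sup>2)"
    and "((\<lambda>t. (cmod (\<Sum>n. c n * cis t ^ n))\<^sup>2) has_integral 2*pi * (\<Sum>n. (cmod (c n))\<^sup>2)) {0..2*pi}"
proof -
  define B where "B = (\<Sum>n. norm (c n))"
  have "norm (c n) \<le> B" for n
    unfolding B_def using c sum_le_suminf[of "\<lambda>n. norm (c n)" "{n}"] by simp
  then have "(cmod (c n))\<^sup>2 \<le> B * norm (c n)" for n
    by (simp add: power2_eq_square mult_right_mono)
  then show sq: "summable (\<lambda>n. (cmod (c n))\<^sup>2)"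
    using c by (intro summable_comparison_test[OF _ summable_mult[OF c]]) auto
  show "((\<lambda>t. (cmod (\<Sum>n. c n * cis t ^ n))\<^sup>2) has_integral 2*pi * (\<Sum>n. (cmod (c n))\<^sup>2)) {0..2*pi}"
  proof (rule has_integral_dominated_convergence)
    show "((\<lambda>t. (cmod (\<Sum>n<N. c n * cis t ^ n))\<^sup>2) has_integral 2*pi * (\<Sum>n<N. (cmod (c n))\<^sup>2)) {0..2*pi}" for N
      by (rule has_integral_norm_trig_poly_squared)
    show "(\<lambda>_. B\<^sup>2) integrable_on {0..2*pi}"
      by (rule integrable_const_ivl)
    show "\<forall>t\<in>{0..2*pi}. norm ((cmod (\<Sum>n<N. c n * cis t ^ n))\<^sup>2) \<le> B\<^sup>2" for N
      using power_series_circle_partial_sums(1)[OF c] by (auto simp: B_def intro: power_mono)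
    show "\<forall>t\<in>{0..2*pi}. (\<lambda>N. (cmod (\<Sum>n<N. c n * cis t ^ n))\<^sup>2) \<longlonglongrightarrow> (cmod (\<Sum>n. c n * cis t ^ n))\<^sup>2"
      by (intro ballI tendsto_intros power_series_circle_partial_sums(2)[OF c])
    show "(\<lambda>N. 2*pi * (\<Sum>n<N. (cmod (c n))\<^sup>2)) \<longlonglongrightarrow> 2*pi * (\<Sum>n. (cmod (c n))\<^sup>2)"
      using sq by (intro tendsto_mult_left summable_LIMSEQ)
  qed
qed

lemma has_integral_power_series_circle_squared:
  fixes c :: "nat \<Rightarrow> complex"
  assumes c: "summable (\<lambda>n. norm (c n))"
  shows "((\<lambda>t. (\<Sum>n. c n * cis t ^ n)\<^sup>2) has_integral 2*pi * (c 0)\<^sup>2) {0..2*pi}"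
proof (rule has_integral_dominated_convergence)
  show "((\<lambda>t. (\<Sum>n<Suc N. c n * cis t ^ n)\<^sup>2) has_integral 2*pi * (c 0)\<^sup>2) {0..2*pi}" for N
    by (rule has_integral_trig_poly_squared) simp
  show "(\<lambda>_. (\<Sum>n. norm (c n))\<^sup>2) integrable_on {0..2*pi}"
    by (rule integrable_const_ivl)
  show "\<forall>t\<in>{0..2*pi}. norm ((\<Sum>n<Suc N. c n * cis t ^ n)\<^sup>2) \<le> (\<Sum>n. norm (c n))\<^sup>2" for N
    using power_series_circle_partial_sums(1)[OF c]
    by (auto simp: norm_power simp del: sum.lessThan_Suc intro: power_mono)
  show "\<forall>t\<in>{0..2*pi}. (\<lambda>N. (\<Sum>n<Suc N. c n * cis t ^ n)\<^sup>2) \<longlonglongrightarrow> (\<Sum>n. c n * cis t ^ n)\<^sup>2"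
    by (intro ballI tendsto_intros LIMSEQ_Suc power_series_circle_partial_sums(2)[OF c])
qed simp

lemma has_integral_Im_power_series_circle_squared:
  fixes c :: "nat \<Rightarrow> complex"
  assumes c: "summable (\<lambda>n. norm (c n))"
  shows "summable (\<lambda>n. (cmod (c (Suc n)))\<^sup>2)"
    and "((\<lambda>t. (Im (\<Sum>n. c n * cis t ^ n))\<^sup>2) has_integral
           pi * ((\<Sum>n. (cmod (c (Suc n)))\<^sup>2) + 2 * (Im (c 0))\<^sup>2)) {0..2*pi}"
proof -
  note sq = has_integral_norm_power_series_circle_squared[OF c]
  show "summable (\<lambda>n. (cmod (c (Suc n)))\<^sup>2)"
    using sq(1) by (rule summable_Suc_iff[THEN iffD2])
  have Im_sq: "(Im z)\<^sup>2 = ((cmod z)\<^sup>2 - Re (z\<^sup>2)) / 2" for z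
    by (simp add: cmod_power2 Re_power2)
  have "((\<lambda>t. (Im (\<Sum>n. c n * cis t ^ n))\<^sup>2) has_integral
          (2*pi * (\<Sum>n. (cmod (c n))\<^sup>2) - Re (2*pi * (c 0)\<^sup>2)) / 2) {0..2*pi}"
    unfolding Im_sq
    by (intro has_integral_divide has_integral_diff sq(2) has_integral_Re has_integral_power_series_circle_squared c)
  also have "(2*pi * (\<Sum>n. (cmod (c n))\<^sup>2) - Re (2*pi * (c 0)\<^sup>2)) / 2
      = pi * ((\<Sum>n. (cmod (c (Suc n)))\<^sup>2) + 2 * (Im (c 0))\<^sup>2)"
  proof -
    have "(\<Sum>n. (cmod (c n))\<^sup>2) = (\<Sum>n. (cmod (c (Suc n)))\<^sup>2) + (cmod (c 0))\<^sup>2"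
      by (simp add: suminf_split_head[OF sq(1)])
    moreover have "(cmod (c 0))\<^sup>2 - Re ((c 0)\<^sup>2) = 2 * (Im (c 0))\<^sup>2"
      by (simp add: cmod_power2 Re_power2)
    ultimately show ?thesis
      by (simp add: algebra_simps)
  qed
  finally show "((\<lambda>t. (Im (\<Sum>n. c n * cis t ^ n))\<^sup>2) has_integral
           pi * ((\<Sum>n. (cmod (c (Suc n)))\<^sup>2) + 2 * (Im (c 0))\<^sup>2)) {0..2*pi}" .
qed

lemma coeffs_squared_sum_le_Im_bound:
  fixes c :: "nat \<Rightarrow> complex"
  assumes c: "summable (\<lambda>n. norm (c n))"
    and bound: "\<And>t. t \<in> {0..2*pi} \<Longrightarrow> \<bar>Im (\<Sum>n. c n * cis t ^ n)\<bar> \<le> M"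
  shows "(\<Sum>n. (cmod (c (Suc n)))\<^sup>2) \<le> 2 * M\<^sup>2"
proof -
  note Im_sq = has_integral_Im_power_series_circle_squared[OF c]
  have const: "((\<lambda>t. M\<^sup>2) has_integral 2*pi * M\<^sup>2) {0..2*pi}"
    using has_integral_const_real[of "M\<^sup>2" 0 "2*pi"] by simp
  have "pi * ((\<Sum>n. (cmod (c (Suc n)))\<^sup>2) + 2 * (Im (c 0))\<^sup>2) \<le> 2*pi * M\<^sup>2"
  proof (rule has_integral_le[OF Im_sq(2) const])
    show "(Im (\<Sum>n. c n * cis t ^ n))\<^sup>2 \<le> M\<^sup>2" if "t \<in> {0..2*pi}" for t
      using power_mono[OF bound[OF that] abs_ge_zero, of 2] by simp
  qed
  moreover have "pi * (\<Sum>n. (cmod (c (Suc n)))\<^sup>2) \<le> pi * ((\<Sum>n. (cmod (c (Suc n)))\<^sup>2) + 2 * (Im (c 0))\<^sup>2)"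
    by (intro mult_left_mono) auto
  ultimately have "pi * (\<Sum>n. (cmod (c (Suc n)))\<^sup>2) \<le> pi * (2 * M\<^sup>2)"
    by linarith
  then show ?thesis
    using mult_le_cancel_left_pos[OF pi_gt_zero] by blast
qed

section \<open>Coefficients of holomorphic functions on the unit disc\<close>

lemma summable_norm_power_series_in_ball:
  fixes c :: "nat \<Rightarrow> complex"
  assumes "\<And>w. w \<in> ball 0 R \<Longrightarrow> summable (\<lambda>n. c n * w ^ n)" and "norm z < R"
  shows "summable (\<lambda>n. norm (c n * z ^ n))"
proof -
  obtain r where r: "norm z < r" "r < R"
    using assms(2) dense by blast
  then have "norm (complex_of_real r) = r"
    using norm_ge_zero[of z] by (simp del: norm_ge_zero)
  then show ?thesis
    using r assms(1)[of "of_real r"] by (intro powser_insidea[of _ "of_real r"]) auto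
qed

lemma fps_expansion_sums:
  assumes "f holomorphic_on ball 0 R" and "w \<in> ball 0 R"
  shows "(\<lambda>n. fps_expansion f 0 $ n * w ^ n) sums f w"
  using holomorphic_power_series[OF assms] by (simp add: fps_expansion_def)

lemma fps_expansion_z_deriv_sums:
  assumes hol: "f holomorphic_on ball 0 R" and w: "w \<in> ball 0 R"
  shows "(\<lambda>n. (of_nat n * fps_expansion f 0 $ n) * w ^ n) sums (w * deriv f w)"
proof -
  have "deriv f holomorphic_on ball 0 R"
    using hol by (rule holomorphic_deriv) simp
  from holomorphic_power_series[OF this w]
  have sums: "(\<lambda>n. w * ((deriv ^^ Suc n) f 0 / fact n * w ^ n)) sums (w * deriv f w)"
    by (intro sums_mult) (simp add: funpow_Suc_right del: funpow.simps)
  have coeff: "w * ((deriv ^^ Suc n) f 0 / fact n * w ^ n)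
      = (of_nat (Suc n) * fps_expansion f 0 $ Suc n) * w ^ Suc n" for n
    by (simp add: fps_expansion_def field_simps del: funpow.simps of_nat_Suc)
  have "(\<lambda>n. (of_nat (Suc n) * fps_expansion f 0 $ Suc n) * w ^ Suc n) sums (w * deriv f w)"
    using sums unfolding coeff .
  then show ?thesis
    by (subst (asm) sums_Suc_iff) simp
qed

lemma Im_bounded_fps_expansion_coeffs:
  assumes hol: "f holomorphic_on ball 0 1" and bound: "\<And>z. z \<in> ball 0 1 \<Longrightarrow> \<bar>Im (f z)\<bar> \<le> M"
  shows "summable (\<lambda>n. (cmod (fps_expansion f 0 $ n))\<^sup>2)"
    and "(\<Sum>n. (cmod (fps_expansion f 0 $ Suc n))\<^sup>2) \<le> 2 * M\<^sup>2"
proof -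
  define a where "a n = fps_expansion f 0 $ n" for n
  \<comment> \<open>On the unit circle itself the series need not converge, so we work on circles of radius
    \<open>\<rho> < 1\<close> and let \<open>\<rho> \<rightarrow> 1\<close> in each partial sum.\<close>
  have partial_sums_radius: "(\<Sum>n<N. (cmod (a (Suc n)))\<^sup>2 * \<rho> ^ (2 * Suc n)) \<le> 2 * M\<^sup>2"
    if \<rho>: "0 \<le> \<rho>" "\<rho> < 1" for \<rho> N
  proof -
    define c where "c n = a n * of_real \<rho> ^ n" for n
    have sums: "(\<lambda>n. c n * cis t ^ n) sums f (of_real \<rho> * cis t)" for t
      using fps_expansion_sums[OF hol, of "of_real \<rho> * cis t"] \<rho>
      by (simp add: c_def a_def norm_mult power_mult_distrib mult_ac)
    have c: "summable (\<lambda>n. norm (c n))"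
      using summable_norm_power_series_in_ball[where c = a and R = 1 and z = "of_real \<rho>"]
        sums_summable[OF fps_expansion_sums[OF hol]] \<rho>
      by (simp add: c_def a_def)
    have "(\<Sum>n<N. (cmod (c (Suc n)))\<^sup>2) \<le> (\<Sum>n. (cmod (c (Suc n)))\<^sup>2)"
      using has_integral_Im_power_series_circle_squared(1)[OF c] by (rule sum_le_suminf) auto
    also have "\<dots> \<le> 2 * M\<^sup>2"
    proof (rule coeffs_squared_sum_le_Im_bound[OF c])
      show "\<bar>Im (\<Sum>n. c n * cis t ^ n)\<bar> \<le> M" for t
        using bound[of "of_real \<rho> * cis t"] \<rho> by (simp add: sums_unique[OF sums, symmetric] norm_mult)
    qed
    also have "(\<Sum>n<N. (cmod (c (Suc n)))\<^sup>2) = (\<Sum>n<N. (cmod (a (Suc n)))\<^sup>2 * \<rho> ^ (2 * Suc n))"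
    proof -
      have "(cmod (c m))\<^sup>2 = (cmod (a m))\<^sup>2 * \<rho> ^ (2 * m)" for m
        using \<rho> by (simp add: c_def norm_mult norm_power power_mult_distrib power_even_eq)
      then show ?thesis
        by (simp only:)
    qed
    finally show ?thesis .
  qed
  have partial_sums: "(\<Sum>n<N. (cmod (a (Suc n)))\<^sup>2) \<le> 2 * M\<^sup>2" for N
  proof -
    have "((\<lambda>\<rho>. \<Sum>n<N. (cmod (a (Suc n)))\<^sup>2 * \<rho> ^ (2 * Suc n)) \<longlongrightarrow> (\<Sum>n<N. (cmod (a (Suc n)))\<^sup>2 * 1 ^ (2 * Suc n))) (at_left 1)"
      by (intro tendsto_intros)
    moreover have "eventually (\<lambda>\<rho>. (\<Sum>n<N. (cmod (a (Suc n)))\<^sup>2 * \<rho> ^ (2 * Suc n)) \<le> 2 * M\<^sup>2) (at_left (1::real))"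
      using eventually_at_left_real[OF zero_less_one] by eventually_elim (use partial_sums_radius in auto)
    ultimately show ?thesis
      using tendsto_le[OF trivial_limit_at_left_real tendsto_const] by fastforce
  qed
  have summable: "summable (\<lambda>n. (cmod (a (Suc n)))\<^sup>2)"
  proof (rule bounded_imp_summable)
    show "(\<Sum>k\<le>n. (cmod (a (Suc k)))\<^sup>2) \<le> 2 * M\<^sup>2" for n
      using partial_sums[of "Suc n"] by (simp only: lessThan_Suc_atMost)
  qed simp
  then show "summable (\<lambda>n. (cmod (fps_expansion f 0 $ n))\<^sup>2)"
    unfolding a_def by (rule summable_Suc_iff[THEN iffD1])
  show "(\<Sum>n. (cmod (fps_expansion f 0 $ Suc n))\<^sup>2) \<le> 2 * M\<^sup>2"
    using suminf_le_const[OF summable partial_sums] by (simp add: a_def)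
qed

lemma has_integral_norm_z_deriv_circle_squared:
  assumes hol: "f holomorphic_on ball 0 1" and r: "0 \<le> r" "r < 1"
  shows "((\<lambda>t. (cmod (of_real r * cis t * deriv f (of_real r * cis t)))\<^sup>2) has_integral
           2*pi * (\<Sum>n. (cmod (fps_expansion f 0 $ n))\<^sup>2 * (real n * r ^ n)\<^sup>2)) {0..2*pi}"
proof -
  define b where "b n = of_nat n * fps_expansion f 0 $ n" for n
  define c where "c n = b n * of_real r ^ n" for n
  have sums: "(\<lambda>n. c n * cis t ^ n) sums (of_real r * cis t * deriv f (of_real r * cis t))" for t
    using fps_expansion_z_deriv_sums[OF hol, of "of_real r * cis t"] r
    by (simp add: b_def c_def norm_mult power_mult_distrib mult_ac)
  have c: "summable (\<lambda>n. norm (c n))"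
    using summable_norm_power_series_in_ball[where c = b and R = 1 and z = "of_real r"]
      sums_summable[OF fps_expansion_z_deriv_sums[OF hol]] r
    by (simp add: b_def c_def)
  have coeffs: "(cmod (c n))\<^sup>2 = (cmod (fps_expansion f 0 $ n))\<^sup>2 * (real n * r ^ n)\<^sup>2" for n
    using r by (simp add: b_def c_def norm_mult norm_power power_mult_distrib)
  show ?thesis
    using has_integral_norm_power_series_circle_squared(2)[OF c]
    unfolding sums_unique[OF sums, symmetric] coeffs .
qed

lemma Ln_comp_Re_pos:
  assumes hol: "p holomorphic_on S" and S: "open S" and pos: "\<And>z. z \<in> S \<Longrightarrow> Re (p z) > 0"
  shows "(\<lambda>z. Ln (p z)) holomorphic_on S"
    and "\<And>z. z \<in> S \<Longrightarrow> deriv (\<lambda>z. Ln (p z)) z = deriv p z / p z"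
    and "\<And>z. z \<in> S \<Longrightarrow> \<bar>Im (Ln (p z))\<bar> \<le> pi / 2"
proof -
  have deriv: "((\<lambda>z. Ln (p z)) has_field_derivative deriv p z / p z) (at z)" if "z \<in> S" for z
  proof -
    have "p z \<notin> \<real>\<^sub>\<le>\<^sub>0"
      using pos[OF that] by (auto simp: complex_nonpos_Reals_iff)
    from DERIV_chain2[OF has_field_derivative_Ln[OF this] holomorphic_derivI[OF hol S that]]
    show ?thesis
      by (simp add: field_simps)
  qed
  then show "(\<lambda>z. Ln (p z)) holomorphic_on S"
    using S holomorphic_on_open field_differentiable_def by blast
  show "deriv (\<lambda>z. Ln (p z)) z = deriv p z / p z" if "z \<in> S" for z
    using deriv[OF that] by (rule DERIV_imp_deriv)
  show "\<bar>Im (Ln (p z))\<bar> \<le> pi / 2" if "z \<in> S" for z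
    using Re_Ln_pos_lt[of "p z"] pos[OF that] by fastforce
qed

lemma I_p_eq_fps_expansion_Ln:
  assumes "p \<in> caratheodory_class" and "0 \<le> r" "r < 1"
  shows "I_p p r = 2*pi * (\<Sum>n. (cmod (fps_expansion (\<lambda>z. Ln (p z)) 0 $ n))\<^sup>2 * (real n * r ^ n)\<^sup>2)"
proof -
  have hol: "p holomorphic_on ball 0 1" and pos: "\<And>z. z \<in> ball 0 1 \<Longrightarrow> Re (p z) > 0"
    using assms(1) by (auto simp: caratheodory_class_def)
  note Ln_p = Ln_comp_Re_pos[OF hol open_ball pos]
  have "of_real r * cis t \<in> ball 0 1" for t
    using assms(2,3) by (simp add: norm_mult)
  then have "deriv (\<lambda>z. Ln (p z)) (of_real r * cis t) = deriv p (of_real r * cis t) / p (of_real r * cis t)" for t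
    using Ln_p(2) by blast
  then have "I_p p r = integral {0..2*pi} (\<lambda>t. (cmod (of_real r * cis t * deriv (\<lambda>z. Ln (p z)) (of_real r * cis t)))\<^sup>2)"
    unfolding I_p_def Let_def cis_conv_exp[symmetric] by simp
  then show ?thesis
    using has_integral_norm_z_deriv_circle_squared[OF Ln_p(1) assms(2,3)] by (simp add: integral_unique)
qed

section \<open>Weighted sums of square-summable coefficients\<close>

lemma nat_mult_power_le_exp_minus_one:
  fixes r :: real
  assumes "0 < r" "r < 1"
  shows "real n * r ^ n * (1 - r) \<le> exp (-1)"
proof -
  define y where "y = real n * (1 - r)"
  have y: "0 \<le> y"
    using assms by (simp add: y_def)
  have "r ^ n \<le> exp (r - 1) ^ n"
    using exp_ge_add_one_self[of "r - 1"] assms by (intro power_mono) auto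
  also have "\<dots> = exp (- y)"
    by (simp add: y_def exp_of_nat_mult[symmetric] algebra_simps)
  finally have "y * r ^ n \<le> y * exp (- y)"
    using y by (rule mult_left_mono)
  also have "\<dots> \<le> exp (y - 1) * exp (- y)"
    using exp_ge_add_one_self[of "y - 1"] by (intro mult_right_mono) auto
  also have "\<dots> = exp (-1)"
    by (simp flip: exp_add)
  finally show ?thesis
    by (simp add: y_def mult_ac)
qed

lemma suminf_mult_n_power_squared_le:
  fixes \<alpha> :: "nat \<Rightarrow> real"
  assumes nonneg: "\<And>n. 0 \<le> \<alpha> n" and summable: "summable \<alpha>" and r: "0 < r" "r < 1"
    and tail: "(\<Sum>n. \<alpha> (Suc n)) \<le> B"
  shows "summable (\<lambda>n. \<alpha> n * (real n * r ^ n)\<^sup>2)"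
    and "(\<Sum>n. \<alpha> n * (real n * r ^ n)\<^sup>2) \<le> exp (-2) * B / (1 - r)\<^sup>2"
proof -
  define K where "K = (exp (-1) / (1 - r))\<^sup>2"
  have le: "\<alpha> n * (real n * r ^ n)\<^sup>2 \<le> \<alpha> n * K" for n
  proof (rule mult_left_mono[OF _ nonneg])
    have "real n * r ^ n \<le> exp (-1) / (1 - r)"
      using nat_mult_power_le_exp_minus_one[OF r] r by (simp add: pos_le_divide_eq)
    then show "(real n * r ^ n)\<^sup>2 \<le> K"
      unfolding K_def using r by (intro power_mono) auto
  qed
  show summable_weighted: "summable (\<lambda>n. \<alpha> n * (real n * r ^ n)\<^sup>2)"
    using le nonneg by (intro summable_comparison_test[OF _ summable_mult2[OF summable]]) auto
  have "(\<Sum>n. \<alpha> n * (real n * r ^ n)\<^sup>2) = (\<Sum>n. \<alpha> (Suc n) * (real (Suc n) * r ^ Suc n)\<^sup>2)"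
    by (simp add: suminf_split_head[OF summable_weighted] del: of_nat_Suc power_Suc)
  also have "\<dots> \<le> (\<Sum>n. \<alpha> (Suc n) * K)"
  proof (rule suminf_le)
    show "summable (\<lambda>n. \<alpha> (Suc n) * (real (Suc n) * r ^ Suc n)\<^sup>2)"
      using summable_weighted by (rule summable_Suc_iff[where f = "\<lambda>n. \<alpha> n * (real n * r ^ n)\<^sup>2", THEN iffD2])
    show "summable (\<lambda>n. \<alpha> (Suc n) * K)"
      using summable by (intro summable_mult2) (simp add: summable_Suc_iff)
  qed (rule le)
  also have "\<dots> = (\<Sum>n. \<alpha> (Suc n)) * K"
    using summable by (intro suminf_mult2[symmetric]) (simp add: summable_Suc_iff)
  also have "\<dots> \<le> B * K"
    using tail by (rule mult_right_mono) (simp add: K_def)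
  also have "\<dots> = exp (-2) * B / (1 - r)\<^sup>2"
    by (simp add: K_def power_divide flip: exp_of_nat_mult)
  finally show "(\<Sum>n. \<alpha> n * (real n * r ^ n)\<^sup>2) \<le> exp (-2) * B / (1 - r)\<^sup>2" .
qed

lemma suminf_mult_n_power_squared_smallo:
  fixes \<alpha> :: "nat \<Rightarrow> real"
  assumes nonneg: "\<And>n. 0 \<le> \<alpha> n" and summable: "summable \<alpha>"
  shows "(\<lambda>r. \<Sum>n. \<alpha> n * (real n * r ^ n)\<^sup>2) \<in> o[at_left 1](\<lambda>r. 1 / (1 - r)\<^sup>2)"
proof (rule smalloI_tendsto)
  note in_interval = eventually_at_left_real[OF zero_less_one]
  then show "eventually (\<lambda>r. 1 / (1 - r)\<^sup>2 \<noteq> 0) (at_left (1::real))"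
    by eventually_elim auto
  have "((\<lambda>r. \<Sum>n. \<alpha> n * (real n * r ^ n * (1 - r))\<^sup>2) \<longlongrightarrow> (\<Sum>n. 0)) (at_left 1)"
  proof (rule tannerys_theorem[THEN conjunct2, THEN conjunct2])
    show "((\<lambda>r. \<alpha> n * (real n * r ^ n * (1 - r))\<^sup>2) \<longlongrightarrow> 0) (at_left 1)" for n
    proof -
      have "((\<lambda>r. \<alpha> n * (real n * r ^ n * (1 - r))\<^sup>2) \<longlongrightarrow> \<alpha> n * (real n * 1 ^ n * (1 - 1))\<^sup>2) (at_left 1)"
        by (intro tendsto_intros)
      then show ?thesis
        by simp
    qed
    show "eventually (\<lambda>(n, r). norm (\<alpha> n * (real n * r ^ n * (1 - r))\<^sup>2) \<le> \<alpha> n * (exp (-1))\<^sup>2)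
        (at_top \<times>\<^sub>F at_left 1)"
      unfolding eventually_prod_filter
    proof (intro exI conjI allI impI)
      show "eventually (\<lambda>_. True) at_top" by simp
      show "eventually (\<lambda>r. r \<in> {0<..<1}) (at_left (1::real))"
        by (fact in_interval)
      fix n :: nat and r :: real assume "r \<in> {0<..<1}"
      then show "case (n, r) of (n, r) \<Rightarrow> norm (\<alpha> n * (real n * r ^ n * (1 - r))\<^sup>2) \<le> \<alpha> n * (exp (-1))\<^sup>2"
        using nonneg[of n] nat_mult_power_le_exp_minus_one[of r n]
        by (auto intro!: mult_left_mono power_mono)
    qed
    show "summable (\<lambda>n. \<alpha> n * (exp (-1))\<^sup>2)"
      using summable by (rule summable_mult2)
  qed (rule trivial_limit_at_left_real)
  moreover have "eventually (\<lambda>r. (\<Sum>n. \<alpha> n * (real n * r ^ n * (1 - r))\<^sup>2)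
      = (\<Sum>n. \<alpha> n * (real n * r ^ n)\<^sup>2) / (1 / (1 - r)\<^sup>2)) (at_left 1)"
    using in_interval
  proof eventually_elim
    case (elim r)
    then show ?case
      using suminf_mult2[OF suminf_mult_n_power_squared_le(1)[OF nonneg summable _ _ order.refl], of r "(1 - r)\<^sup>2"]
      by (simp add: power_mult_distrib mult_ac)
  qed
  ultimately show "((\<lambda>r. (\<Sum>n. \<alpha> n * (real n * r ^ n)\<^sup>2) / (1 / (1 - r)\<^sup>2)) \<longlongrightarrow> 0) (at_left 1)"
    by (simp add: tendsto_cong)
qed

theorem theorem1p1:
  fixes p :: "complex \<Rightarrow> complex"
  assumes "p \<in> caratheodory_class"
  shows "(\<forall>r::real. 0 < r \<and> r < 1 \<longrightarrow> I_p p r \<le> pi ^ 3 * exp (-2) / (1 - r)\<^sup>2)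
    \<and> (\<lambda>r. I_p p r) \<in> o[at_left 1](\<lambda>r. 1 / (1 - r)\<^sup>2)"
proof -
  define \<alpha> where "\<alpha> n = (cmod (fps_expansion (\<lambda>z. Ln (p z)) 0 $ n))\<^sup>2" for n
  have hol: "p holomorphic_on ball 0 1" and pos: "\<And>z. z \<in> ball 0 1 \<Longrightarrow> Re (p z) > 0"
    using assms by (auto simp: caratheodory_class_def)
  note Ln_p = Ln_comp_Re_pos[OF hol open_ball pos]
  have \<alpha>_nonneg: "\<And>n. 0 \<le> \<alpha> n" and \<alpha>_summable: "summable \<alpha>" and \<alpha>_tail: "(\<Sum>n. \<alpha> (Suc n)) \<le> pi\<^sup>2 / 2"
    using Im_bounded_fps_expansion_coeffs[OF Ln_p(1) Ln_p(3)] by (simp_all add: \<alpha>_def[abs_def] power_divide)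
  have I_p_eq: "I_p p r = 2*pi * (\<Sum>n. \<alpha> n * (real n * r ^ n)\<^sup>2)" if "r \<in> {0<..<1}" for r
    using I_p_eq_fps_expansion_Ln[OF assms] that by (simp add: \<alpha>_def)
  have bound: "I_p p r \<le> pi ^ 3 * exp (-2) / (1 - r)\<^sup>2" if r: "0 < r" "r < 1" for r
  proof -
    have "I_p p r = 2*pi * (\<Sum>n. \<alpha> n * (real n * r ^ n)\<^sup>2)"
      using r by (simp add: I_p_eq)
    also have "\<dots> \<le> 2*pi * (exp (-2) * (pi\<^sup>2 / 2) / (1 - r)\<^sup>2)"
      using suminf_mult_n_power_squared_le(2)[OF \<alpha>_nonneg \<alpha>_summable r \<alpha>_tail] by (rule mult_left_mono) simp
    also have "\<dots> = pi ^ 3 * exp (-2) / (1 - r)\<^sup>2"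
      by (simp add: eval_nat_numeral)
    finally show ?thesis .
  qed
  have "eventually (\<lambda>r. 2*pi * (\<Sum>n. \<alpha> n * (real n * r ^ n)\<^sup>2) = I_p p r) (at_left 1)"
    using eventually_at_left_real[OF zero_less_one] by eventually_elim (simp add: I_p_eq)
  then have "(\<lambda>r. I_p p r) \<in> o[at_left 1](\<lambda>r. 1 / (1 - r)\<^sup>2)"
    by (rule landau_o.small.in_cong[THEN iffD1])
      (use suminf_mult_n_power_squared_smallo[OF \<alpha>_nonneg \<alpha>_summable] in simp)
  with bound show ?thesis
    by blast
qed

end
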